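(* For every $n\ge 1$, every doubly stochastic $n\times n$ matrix $\mathcal M$ and every $\kappa\le\frac{n}{2n-1}$, there exists a directed $(2n-1)$-regular multigraph $G$ on $[n]$ whose throughput with respect to $\mathcal M$ is at least $\kappa$.
   Context: Let $n\ge 1$ and $[n]=\{1,\dots,n\}$. Networks are finite directed multigraphs on vertex set $[n]$; self-loops and parallel arcs are allowed. A directed multigraph is directed $r$-regular if every vertex has exactly $r$ outgoing and exactly $r$ incoming arcs (a self-loop at $v$ counts as one outgoing and one incoming arc of $v$). A path is a non-empty sequence of arcs $((u_1,v_1),\dots,(u_\ell,v_\ell))$ with $v_i=u_{i+1}$ for $i<\ell$; it goes from $u_1$ to $v_\ell$ and has length $\ell\ge 1$. An $n\times n$ matrix is doubly stochastic if all entries are nonnegative and every row and every column sums to $1$. In a directed $(2n-1)$-regular multigraph $G$ on $[n]$ every arc has capacity $\frac{1}{2n-1}$. $G$ hosts a nonnegative $n\times n$ matrix $\mathcal M=(a_{i,j})$ if there is a finite collection $\{(P_k,d_k)\}$, where each $P_k$ is a path in $G$ from some $s_k$ to some $t_k$ and $d_k\ge 0$, such that $\sum_{k:\,s_k=u,\,t_k=v} d_k=a_{u,v}$ for all $u,v\in[n]$, and for every arc $e$ of $G$ (parallel arcs are distinct) $\sum_{k:\,e\in P_k} d_k\le \frac{1}{2n-1}$. The throughput of $G$ with respect to a doubly stochastic $\mathcal M$ is the largest $\theta$ such that $G$ hosts $\theta\mathcal M$. *)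

theory Defs
  imports Complex_Main
begin

text \<open>A network on [n] = {1..n} is a finite directed multigraph, given as a list of arcs;
  arc number i (for i < length G) goes from fst (G!i) to snd (G!i).  Parallel arcs are
  distinct list positions; self-loops are allowed.\<close>

type_synonym multigraph = "(nat \<times> nat) list"

definition arcs_in :: "nat \<Rightarrow> multigraph \<Rightarrow> bool" where
  "arcs_in n G \<longleftrightarrow> (\<forall>e\<in>set G. fst e \<in> {1..n} \<and> snd e \<in> {1..n})"

definition dir_regular :: "nat \<Rightarrow> nat \<Rightarrow> multigraph \<Rightarrow> bool" where
  "dir_regular n r G \<longleftrightarrow> arcs_in n G \<and>
     (\<forall>v\<in>{1..n}. card {i. i < length G \<and> fst (G!i) = v} = r
               \<and> card {i. i < length G \<and> snd (G!i) = v} = r)"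

definition is_path :: "multigraph \<Rightarrow> nat list \<Rightarrow> bool" where
  "is_path G P \<longleftrightarrow> P \<noteq> [] \<and> (\<forall>k\<in>set P. k < length G) \<and>
     (\<forall>i. Suc i < length P \<longrightarrow> snd (G ! (P!i)) = fst (G ! (P ! Suc i)))"

definition path_src :: "multigraph \<Rightarrow> nat list \<Rightarrow> nat" where
  "path_src G P = fst (G ! hd P)"

definition path_tgt :: "multigraph \<Rightarrow> nat list \<Rightarrow> nat" where
  "path_tgt G P = snd (G ! last P)"

definition hosts :: "nat \<Rightarrow> multigraph \<Rightarrow> (nat \<Rightarrow> nat \<Rightarrow> real) \<Rightarrow> bool" where
  "hosts n G a \<longleftrightarrow> (\<exists>ps :: (nat list \<times> real) list.
     (\<forall>(P, d)\<in>set ps. is_path G P \<and> d \<ge> 0) \<and>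
     (\<forall>u\<in>{1..n}. \<forall>v\<in>{1..n}.
        sum_list (map snd (filter (\<lambda>(P, d). path_src G P = u \<and> path_tgt G P = v) ps)) = a u v) \<and>
     (\<forall>e < length G.
        sum_list (map snd (filter (\<lambda>(P, d). e \<in> set P) ps)) \<le> 1 / (2 * real n - 1)))"

definition doubly_stochastic :: "nat \<Rightarrow> (nat \<Rightarrow> nat \<Rightarrow> real) \<Rightarrow> bool" where
  "doubly_stochastic n M \<longleftrightarrow>
     (\<forall>i\<in>{1..n}. \<forall>j\<in>{1..n}. M i j \<ge> 0) \<and>
     (\<forall>i\<in>{1..n}. (\<Sum>j=1..n. M i j) = 1) \<and>
     (\<forall>j\<in>{1..n}. (\<Sum>i=1..n. M i j) = 1)"

definition throughput :: "nat \<Rightarrow> multigraph \<Rightarrow> (nat \<Rightarrow> nat \<Rightarrow> real) \<Rightarrow> real" where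
  "throughput n G M = Sup {\<theta>. hosts n G (\<lambda>u v. \<theta> * M u v)}"

end

theory Submission
  imports Defs
begin

(* Valiant load balancing (vlb).  The network has two layers on [n]: all n^2 ordered pairs (loops
   included) and all n(n - 1) ordered pairs of distinct vertices, so every vertex has in- and
   out-degree 2n - 1.  The demand from u to v is split evenly over the n relays w and sent along
   the first-layer arc u -> w followed by the second-layer arc w -> v (only the first-layer arc
   u -> v when w = v).  Giving the route (u, v, w) the flow M u v / (2n - 1), the pair (u, v)
   receives n M u v / (2n - 1); a first-layer arc (a, b) is used only by the routes (a, v, b) and a
   second-layer arc (a, b) only by the routes (u, b, a), so unit row and column sums bound every
   arc load by the capacity 1 / (2n - 1).  The throughput, a supremum, is finite because no demand
   can exceed the total capacity of the network. *)

lemma sum_list_filter_map_distinct: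
  assumes "distinct xs"
  shows "sum_list (map snd (filter Q (map h xs))) = (\<Sum>i | i \<in> set xs \<and> Q (h i). snd (h i))"
proof -
  have "{i. i \<in> set xs \<and> Q (h i)} = set (filter (Q \<circ> h) xs)" by auto
  then show ?thesis
    using assms by (simp add: filter_map sum_list_distinct_conv_sum_set)
qed

lemma hosts_by_path_family:
  fixes F :: "'i set" and path :: "'i \<Rightarrow> nat list" and w :: "'i \<Rightarrow> real"
  assumes "finite F"
    and paths: "\<And>i. i \<in> F \<Longrightarrow> is_path G (path i) \<and> w i \<ge> 0"
    and demand: "\<And>u v. u \<in> {1..n} \<Longrightarrow> v \<in> {1..n} \<Longrightarrow>
      (\<Sum>i | i \<in> F \<and> path_src G (path i) = u \<and> path_tgt G (path i) = v. w i) = a u v"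
    and load: "\<And>e. e < length G \<Longrightarrow>
      (\<Sum>i | i \<in> F \<and> e \<in> set (path i). w i) \<le> 1 / (2 * real n - 1)"
  shows "hosts n G a"
proof -
  obtain xs where xs: "set xs = F" "distinct xs"
    using finite_distinct_list[OF \<open>finite F\<close>] by blast
  define ps where "ps = map (\<lambda>i. (path i, w i)) xs"
  have "\<forall>(P, d)\<in>set ps. is_path G P \<and> d \<ge> 0"
    using paths xs(1) by (auto simp: ps_def)
  moreover have "\<forall>u\<in>{1..n}. \<forall>v\<in>{1..n}.
      sum_list (map snd (filter (\<lambda>(P, d). path_src G P = u \<and> path_tgt G P = v) ps)) = a u v"
    using demand by (simp add: ps_def sum_list_filter_map_distinct xs)
  moreover have "\<forall>e < length G.
      sum_list (map snd (filter (\<lambda>(P, d). e \<in> set P) ps)) \<le> 1 / (2 * real n - 1)"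
    using load by (simp add: ps_def sum_list_filter_map_distinct xs)
  ultimately show ?thesis
    unfolding hosts_def by blast
qed

lemma total_flow_le_total_load:
  assumes "\<forall>(P, d)\<in>set ps. is_path G P \<and> d \<ge> (0::real)"
  shows "sum_list (map snd ps) \<le> (\<Sum>e<length G. sum_list (map snd (filter (\<lambda>(P, d). e \<in> set P) ps)))"
  using assms
proof (induction ps)
  case Nil
  then show ?case by simp
next
  case (Cons x ps)
  obtain P d where x: "x = (P, d)" by (cases x)
  have path: "is_path G P" and d_nonneg: "d \<ge> 0" using Cons.prems x by auto
  have IH: "sum_list (map snd ps) \<le> (\<Sum>e<length G. sum_list (map snd (filter (\<lambda>(P, d). e \<in> set P) ps)))"
    using Cons by auto
  from path have "hd P \<in> {..<length G} \<inter> set P"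
    unfolding is_path_def by auto
  then have "d \<le> (\<Sum>e<length G. if e \<in> set P then d else 0)"
    using member_le_sum[of "hd P" "{..<length G}" "\<lambda>e. if e \<in> set P then d else 0"] d_nonneg
    by auto
  moreover have "(\<Sum>e<length G. sum_list (map snd (filter (\<lambda>(P, d). e \<in> set P) (x # ps))))
     = (\<Sum>e<length G. if e \<in> set P then d else 0)
       + (\<Sum>e<length G. sum_list (map snd (filter (\<lambda>(P, d). e \<in> set P) ps)))"
    unfolding x sum.distrib[symmetric] by (rule sum.cong) auto
  ultimately show ?case using IH x by simp
qed

lemma hosts_entry_le:
  assumes "hosts n G a" "u \<in> {1..n}" "v \<in> {1..n}"
  shows "a u v \<le> real (length G) / (2 * real n - 1)"
proof -
  obtain ps :: "(nat list \<times> real) list" where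
    paths: "\<forall>(P, d)\<in>set ps. is_path G P \<and> d \<ge> 0" and
    demand: "\<forall>u\<in>{1..n}. \<forall>v\<in>{1..n}.
      sum_list (map snd (filter (\<lambda>(P, d). path_src G P = u \<and> path_tgt G P = v) ps)) = a u v" and
    load: "\<forall>e < length G. sum_list (map snd (filter (\<lambda>(P, d). e \<in> set P) ps)) \<le> 1 / (2 * real n - 1)"
    using assms(1) unfolding hosts_def by blast
  have "a u v = sum_list (map snd (filter (\<lambda>(P, d). path_src G P = u \<and> path_tgt G P = v) ps))"
    using demand assms(2,3) by simp
  also have "\<dots> \<le> sum_list (map snd ps)"
    unfolding sum_list_map_filter' by (rule sum_list_mono) (use paths in auto)
  also have "\<dots> \<le> (\<Sum>e<length G. sum_list (map snd (filter (\<lambda>(P, d). e \<in> set P) ps)))"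
    by (rule total_flow_le_total_load[OF paths])
  also have "\<dots> \<le> (\<Sum>e<length G. 1 / (2 * real n - 1))"
    by (rule sum_mono) (use load in auto)
  finally show ?thesis by simp
qed

lemma throughput_ge_hosted:
  assumes "hosts n G (\<lambda>u v. \<theta> * M u v)" and "u \<in> {1..n}" "v \<in> {1..n}" "M u v > 0"
  shows "\<theta> \<le> throughput n G M"
  unfolding throughput_def
proof (rule cSup_upper)
  show "\<theta> \<in> {\<theta>. hosts n G (\<lambda>u v. \<theta> * M u v)}" using assms(1) by simp
  show "bdd_above {\<theta>. hosts n G (\<lambda>u v. \<theta> * M u v)}"
  proof (rule bdd_aboveI)
    fix \<theta>' assume "\<theta>' \<in> {\<theta>. hosts n G (\<lambda>u v. \<theta> * M u v)}"
    then have "\<theta>' * M u v \<le> real (length G) / (2 * real n - 1)"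
      using hosts_entry_le[of n G _ u v] assms(2,3) by auto
    then show "\<theta>' \<le> real (length G) / (2 * real n - 1) / M u v"
      by (simp only: pos_le_divide_eq[OF assms(4)])
  qed
qed

lemma doubly_stochastic_pos_entry:
  assumes "n \<ge> 1" "doubly_stochastic n M"
  obtains v where "v \<in> {1..n}" "M 1 v > 0"
proof -
  have row_sum: "(\<Sum>v=1..n. M 1 v) = 1"
    using assms unfolding doubly_stochastic_def by auto
  have "\<exists>v\<in>{1..n}. M 1 v > 0"
  proof (rule ccontr)
    assume "\<not> ?thesis"
    then have "(\<Sum>v=1..n. M 1 v) \<le> 0"
      by (intro sum_nonpos) (auto simp: not_less)
    with row_sum show False by simp
  qed
  then show ?thesis using that by blast
qed

definition complete_arcs :: "nat \<Rightarrow> multigraph" where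
  "complete_arcs n = List.product [1..<Suc n] [1..<Suc n]"

definition loopless_arcs :: "nat \<Rightarrow> multigraph" where
  "loopless_arcs n = filter (\<lambda>(a, b). a \<noteq> b) (complete_arcs n)"

definition vlb_network :: "nat \<Rightarrow> multigraph" where
  "vlb_network n = complete_arcs n @ loopless_arcs n"

definition arc_index :: "multigraph \<Rightarrow> nat \<times> nat \<Rightarrow> nat" where
  "arc_index G x = (SOME i. i < length G \<and> G ! i = x)"

definition direct_arc :: "nat \<Rightarrow> nat \<Rightarrow> nat \<Rightarrow> nat" where
  "direct_arc n a b = arc_index (complete_arcs n) (a, b)"

definition relay_arc :: "nat \<Rightarrow> nat \<Rightarrow> nat \<Rightarrow> nat" where
  "relay_arc n a b = n * n + arc_index (loopless_arcs n) (a, b)"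

definition vlb_route :: "nat \<Rightarrow> nat \<times> nat \<times> nat \<Rightarrow> nat list" where
  "vlb_route n = (\<lambda>(u, v, w).
     if w = v then [direct_arc n u v] else [direct_arc n u w, relay_arc n w v])"

lemma arc_index:
  assumes "x \<in> set G"
  shows "arc_index G x < length G \<and> G ! arc_index G x = x"
  unfolding arc_index_def by (rule someI_ex) (use assms in \<open>auto simp: in_set_conv_nth\<close>)

lemma set_complete_arcs: "set (complete_arcs n) = {1..n} \<times> {1..n}"
  by (auto simp: complete_arcs_def)

lemma length_complete_arcs: "length (complete_arcs n) = n * n"
  by (simp add: complete_arcs_def)

lemma distinct_complete_arcs: "distinct (complete_arcs n)"
  by (simp add: complete_arcs_def distinct_product)

lemma set_loopless_arcs: "set (loopless_arcs n) = {(a, b) \<in> {1..n} \<times> {1..n}. a \<noteq> b}"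
  by (auto simp: loopless_arcs_def set_complete_arcs)

lemma distinct_loopless_arcs: "distinct (loopless_arcs n)"
  by (simp add: loopless_arcs_def distinct_complete_arcs)

lemma set_vlb_network: "set (vlb_network n) \<subseteq> {1..n} \<times> {1..n}"
  by (auto simp: vlb_network_def set_complete_arcs set_loopless_arcs)

lemma vlb_network_card_arcs:
  "card {i. i < length (vlb_network n) \<and> P (vlb_network n ! i)}
   = card ({p. P p} \<inter> set (complete_arcs n)) + card ({p. P p} \<inter> set (loopless_arcs n))"
proof -
  have "card {i. i < length (vlb_network n) \<and> P (vlb_network n ! i)}
      = length (filter P (vlb_network n))"
    by (rule length_filter_conv_card[symmetric])
  also have "\<dots> = length (filter P (complete_arcs n)) + length (filter P (loopless_arcs n))"
    by (simp add: vlb_network_def)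
  finally show ?thesis
    by (simp add: distinct_length_filter distinct_complete_arcs distinct_loopless_arcs)
qed

lemma dir_regular_vlb_network: "dir_regular n (2 * n - 1) (vlb_network n)"
  unfolding dir_regular_def
proof (intro conjI ballI)
  show "arcs_in n (vlb_network n)"
    using set_vlb_network unfolding arcs_in_def by fastforce
next
  fix v assume v: "v \<in> {1..n}"
  have "{p. fst p = v} \<inter> set (complete_arcs n) = {v} \<times> {1..n}"
    and "{p. fst p = v} \<inter> set (loopless_arcs n) = {v} \<times> ({1..n} - {v})"
    using v by (auto simp: set_complete_arcs set_loopless_arcs)
  with v show "card {i. i < length (vlb_network n) \<and> fst (vlb_network n ! i) = v} = 2 * n - 1"
    using vlb_network_card_arcs[of n "\<lambda>p. fst p = v"] by (simp add: card_cartesian_product)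
  have "{p. snd p = v} \<inter> set (complete_arcs n) = {1..n} \<times> {v}"
    and "{p. snd p = v} \<inter> set (loopless_arcs n) = ({1..n} - {v}) \<times> {v}"
    using v by (auto simp: set_complete_arcs set_loopless_arcs)
  with v show "card {i. i < length (vlb_network n) \<and> snd (vlb_network n ! i) = v} = 2 * n - 1"
    using vlb_network_card_arcs[of n "\<lambda>p. snd p = v"] by (simp add: card_cartesian_product)
qed

lemma direct_arc:
  assumes "a \<in> {1..n}" "b \<in> {1..n}"
  shows "direct_arc n a b < n * n \<and> vlb_network n ! direct_arc n a b = (a, b)"
  using arc_index[of "(a, b)" "complete_arcs n"] assms
  by (simp add: direct_arc_def vlb_network_def nth_append set_complete_arcs length_complete_arcs)

lemma relay_arc:
  assumes "a \<in> {1..n}" "b \<in> {1..n}" "a \<noteq> b"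
  shows "n * n \<le> relay_arc n a b \<and> relay_arc n a b < length (vlb_network n)
    \<and> vlb_network n ! relay_arc n a b = (a, b)"
  using arc_index[of "(a, b)" "loopless_arcs n"] assms
  by (simp add: relay_arc_def vlb_network_def nth_append set_loopless_arcs length_complete_arcs)

lemma vlb_route_is_path:
  assumes "u \<in> {1..n}" "v \<in> {1..n}" "w \<in> {1..n}"
  shows "is_path (vlb_network n) (vlb_route n (u, v, w))
    \<and> path_src (vlb_network n) (vlb_route n (u, v, w)) = u
    \<and> path_tgt (vlb_network n) (vlb_route n (u, v, w)) = v"
proof (cases "w = v")
  case True
  then show ?thesis
    using direct_arc[OF assms(1,2)] length_complete_arcs[of n]
    by (simp add: vlb_route_def is_path_def path_src_def path_tgt_def vlb_network_def)
next
  case False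
  then show ?thesis
    using direct_arc[OF assms(1,3)] relay_arc[OF assms(3,2) False] length_complete_arcs[of n]
    by (auto simp: vlb_route_def is_path_def path_src_def path_tgt_def vlb_network_def less_Suc_eq)
qed

lemma mem_vlb_route:
  assumes "u \<in> {1..n}" "v \<in> {1..n}" "w \<in> {1..n}" "e \<in> set (vlb_route n (u, v, w))"
  shows "(e < n * n \<and> vlb_network n ! e = (u, w)) \<or> (n * n \<le> e \<and> vlb_network n ! e = (w, v))"
proof (cases "w = v")
  case True
  then show ?thesis using direct_arc[OF assms(1,2)] assms(4) by (simp add: vlb_route_def)
next
  case False
  then show ?thesis using direct_arc[OF assms(1,3)] relay_arc[OF assms(3,2) False] assms(4)
    by (auto simp: vlb_route_def)
qed

lemma vlb_routes_from_to:
  assumes "u \<in> {1..n}" "v \<in> {1..n}"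
  shows "{t. t \<in> {1..n} \<times> {1..n} \<times> {1..n} \<and> path_src (vlb_network n) (vlb_route n t) = u
            \<and> path_tgt (vlb_network n) (vlb_route n t) = v} = {u} \<times> {v} \<times> {1..n}"
  using vlb_route_is_path assms by fastforce

lemma vlb_routes_through_arc:
  assumes "vlb_network n ! e = (a, b)"
  shows "{t. t \<in> {1..n} \<times> {1..n} \<times> {1..n} \<and> e \<in> set (vlb_route n t)}
    \<subseteq> (if e < n * n then (\<lambda>v. (a, v, b)) ` {1..n} else (\<lambda>u. (u, b, a)) ` {1..n})"
  using mem_vlb_route assms by (cases "e < n * n") force+

lemma vlb_arc_load_le:
  assumes "doubly_stochastic n M" "c \<ge> 0" "e < length (vlb_network n)"
  shows "(\<Sum>t | t \<in> {1..n} \<times> {1..n} \<times> {1..n} \<and> e \<in> set (vlb_route n t).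
            case t of (u, v, _) \<Rightarrow> c * M u v) \<le> c"
proof -
  define A where "A = {1..n}"
  define weight where "weight = (\<lambda>(u, v, _::nat). c * M u v)"
  have weight_nonneg: "weight t \<ge> 0" if "t \<in> A \<times> A \<times> A" for t
    using assms(1,2) that unfolding doubly_stochastic_def weight_def A_def by auto
  have "vlb_network n ! e \<in> A \<times> A"
    using set_vlb_network nth_mem[OF assms(3)] unfolding A_def by blast
  then obtain a b where ab: "vlb_network n ! e = (a, b)" "a \<in> A" "b \<in> A"
    by blast
  let ?users = "if e < n * n then (\<lambda>v. (a, v, b)) ` A else (\<lambda>u. (u, b, a)) ` A"
  have "(\<Sum>t | t \<in> A \<times> A \<times> A \<and> e \<in> set (vlb_route n t). weight t) \<le> (\<Sum>t\<in>?users. weight t)"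
  proof (rule sum_mono2)
    show "finite ?users" by (simp add: A_def)
    show "{t. t \<in> A \<times> A \<times> A \<and> e \<in> set (vlb_route n t)} \<subseteq> ?users"
      using vlb_routes_through_arc[OF ab(1)] unfolding A_def .
    show "weight t \<ge> 0" if "t \<in> ?users - {t. t \<in> A \<times> A \<times> A \<and> e \<in> set (vlb_route n t)}" for t
      using that weight_nonneg ab(2,3) by (auto split: if_splits)
  qed
  also have "\<dots> = (if e < n * n then \<Sum>v\<in>A. c * M a v else \<Sum>u\<in>A. c * M u b)"
    by (simp add: sum.reindex inj_on_def weight_def)
  also have "\<dots> = c"
    using assms(1) ab(2,3) unfolding sum_distrib_left[symmetric]
    by (simp add: A_def doubly_stochastic_def)
  finally show ?thesis
    unfolding weight_def A_def .
qed

lemma hosts_vlb_network: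
  assumes "n \<ge> 1" "doubly_stochastic n M"
  shows "hosts n (vlb_network n) (\<lambda>u v. real n / (2 * real n - 1) * M u v)"
proof (rule hosts_by_path_family[where F = "{1..n} \<times> {1..n} \<times> {1..n}" and path = "vlb_route n"
      and w = "\<lambda>(u, v, _). 1 / (2 * real n - 1) * M u v"])
  have cap_nonneg: "1 / (2 * real n - 1) \<ge> 0" using assms(1) by simp
  show "finite ({1..n} \<times> {1..n} \<times> {1..n})" by simp
  show "is_path (vlb_network n) (vlb_route n t) \<and> (case t of (u, v, _) \<Rightarrow> 1 / (2 * real n - 1) * M u v) \<ge> 0"
    if "t \<in> {1..n} \<times> {1..n} \<times> {1..n}" for t
    using that vlb_route_is_path cap_nonneg assms(2) by (auto simp: doubly_stochastic_def)
  show "(\<Sum>t | t \<in> {1..n} \<times> {1..n} \<times> {1..n} \<and> path_src (vlb_network n) (vlb_route n t) = u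
            \<and> path_tgt (vlb_network n) (vlb_route n t) = v.
          case t of (u, v, _) \<Rightarrow> 1 / (2 * real n - 1) * M u v) = real n / (2 * real n - 1) * M u v"
    if "u \<in> {1..n}" "v \<in> {1..n}" for u v
  proof -
    have "(\<Sum>t\<in>{u} \<times> {v} \<times> {1..n}. case t of (u, v, _) \<Rightarrow> 1 / (2 * real n - 1) * M u v)
        = (\<Sum>t\<in>{u} \<times> {v} \<times> {1..n}. 1 / (2 * real n - 1) * M u v)"
      by (rule sum.cong) auto
    then show ?thesis
      unfolding vlb_routes_from_to[OF that] by (simp add: card_cartesian_product)
  qed
  show "(\<Sum>t | t \<in> {1..n} \<times> {1..n} \<times> {1..n} \<and> e \<in> set (vlb_route n t).
          case t of (u, v, _) \<Rightarrow> 1 / (2 * real n - 1) * M u v) \<le> 1 / (2 * real n - 1)"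
    if "e < length (vlb_network n)" for e
    by (rule vlb_arc_load_le[OF assms(2) cap_nonneg that])
qed

theorem mainTheorem5:
  fixes n :: nat and M :: "nat \<Rightarrow> nat \<Rightarrow> real" and \<kappa> :: real
  assumes "n \<ge> 1" and "doubly_stochastic n M" and "\<kappa> \<le> real n / (2 * real n - 1)"
  shows "\<exists>G. dir_regular n (2 * n - 1) G \<and> throughput n G M \<ge> \<kappa>"
proof (intro exI conjI)
  show "dir_regular n (2 * n - 1) (vlb_network n)"
    by (rule dir_regular_vlb_network)
  obtain v where "v \<in> {1..n}" "M 1 v > 0"
    using doubly_stochastic_pos_entry[OF assms(1,2)] .
  with assms have "real n / (2 * real n - 1) \<le> throughput n (vlb_network n) M"
    by (intro throughput_ge_hosted[OF hosts_vlb_network]) auto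
  with assms(3) show "\<kappa> \<le> throughput n (vlb_network n) M"
    by linarith
qed

end
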